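(* Let $s\in\{1,2,3\}$ and let $P\in R$ satisfy $DP=D_1P=D_2P=D_3P=D_4P=0$. Then there exists $Q\in R$ with $\partial_{s4}Q=P$ and $DQ=D_1Q=D_2Q=D_3Q=D_4Q=0$.
   Context: $R=\mathbb C[x_1,x_2,x_3,x_4,x_{12},x_{13},x_{14},x_{23},x_{24},x_{34}]$ (i.e. $\mathrm{Sym}(\mathbb C^4)\otimes\mathrm{Sym}(\Lambda^2\mathbb C^4)$), $\partial_i=\partial/\partial x_i$, $\partial_{ij}=\partial/\partial x_{ij}$, $D=\partial_{12}\partial_{34}-\partial_{13}\partial_{24}+\partial_{14}\partial_{23}$, $D_1=\partial_{23}\partial_4-\partial_{24}\partial_3+\partial_{34}\partial_2$, $D_2=\partial_{13}\partial_4-\partial_{14}\partial_3+\partial_{34}\partial_1$, $D_3=\partial_{12}\partial_4-\partial_{14}\partial_2+\partial_{24}\partial_1$, $D_4=\partial_{12}\partial_3-\partial_{13}\partial_2+\partial_{23}\partial_1$. *)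

theory Defs
  imports Complex_Main
begin

datatype var = X1 | X2 | X3 | X4 | X12 | X13 | X14 | X23 | X24 | X34

text \<open>A polynomial is represented by its coefficient function on monomials
  (exponent vectors var => nat); it is a polynomial iff finitely many
  coefficients are nonzero.\<close>
type_synonym mono = "var \<Rightarrow> nat"
type_synonym cpoly = "mono \<Rightarrow> complex"

definition polys :: "cpoly set" where
  "polys = {p. finite {m. p m \<noteq> 0}}"

definition pd :: "var \<Rightarrow> cpoly \<Rightarrow> cpoly" where
  "pd v p = (\<lambda>m. of_nat (m v + 1) * p (m(v := m v + 1)))"

definition padd :: "cpoly \<Rightarrow> cpoly \<Rightarrow> cpoly" where
  "padd p q = (\<lambda>m. p m + q m)"

definition psub :: "cpoly \<Rightarrow> cpoly \<Rightarrow> cpoly" where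
  "psub p q = (\<lambda>m. p m - q m)"

definition pd2 :: "var \<Rightarrow> var \<Rightarrow> cpoly \<Rightarrow> cpoly" where
  "pd2 a b p = pd a (pd b p)"

definition opD :: "cpoly \<Rightarrow> cpoly" where
  "opD p = padd (psub (pd2 X12 X34 p) (pd2 X13 X24 p)) (pd2 X14 X23 p)"

definition opD1 :: "cpoly \<Rightarrow> cpoly" where
  "opD1 p = padd (psub (pd2 X23 X4 p) (pd2 X24 X3 p)) (pd2 X34 X2 p)"

definition opD2 :: "cpoly \<Rightarrow> cpoly" where
  "opD2 p = padd (psub (pd2 X13 X4 p) (pd2 X14 X3 p)) (pd2 X34 X1 p)"

definition opD3 :: "cpoly \<Rightarrow> cpoly" where
  "opD3 p = padd (psub (pd2 X12 X4 p) (pd2 X14 X2 p)) (pd2 X24 X1 p)"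

definition opD4 :: "cpoly \<Rightarrow> cpoly" where
  "opD4 p = padd (psub (pd2 X12 X3 p) (pd2 X13 X2 p)) (pd2 X23 X1 p)"

definition var_s4 :: "nat \<Rightarrow> var" where
  "var_s4 s = (if s = 1 then X14 else if s = 2 then X24 else X34)"

end

theory Submission
  imports Defs "HOL-Library.Function_Algebras" "HOL-Computational_Algebra.Polynomial"
begin

(* Under the apolarity pairing <x^m, P> = m! P_m, polynomials killed by D, D_1, ..., D_4 are the
   linear functionals vanishing on the ideal J of five quadrics, and the derivative along x_s4 is
   precomposition with multiplication by x_s4.  Reading x_ij as the Pluecker coordinate p_ij and x_i
   as p_i5, J is the ideal of Gr(2,5), and the theorem says that x_s4 is a nonzerodivisor on R/J.
   Order the indices with s and 4 first, so that every variable is a chord between two of five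
   points on a line.  A nested pair of chords is the leading term of a Pluecker relation whose other
   terms have smaller total squared chord length, so each monomial reduces modulo J to nonnesting
   ones; at the Pluecker coordinates of a 2 x 5 matrix of powers of t, distinct nonnesting
   monomials have distinct degrees, so the normal form is unique.  The chord of x_s4 is nested with
   no other, so multiplication by x_s4 commutes with normal forms, and the lifted functional is
   m |-> P(normal form of m divided by x_s4). *)

lemma UNIV_var: "(UNIV :: var set) = {X1, X2, X3, X4, X12, X13, X14, X23, X24, X34}"
  using var.exhaust by auto

instance var :: finite
  by standard (simp add: UNIV_var)

definition times_var :: "var \<Rightarrow> mono \<Rightarrow> mono" where
  "times_var v m = m(v := Suc (m v))"

definition div_var :: "var \<Rightarrow> mono \<Rightarrow> mono" where
  "div_var v m = m(v := m v - 1)"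

definition mono_deg :: "mono \<Rightarrow> nat" where
  "mono_deg m = (\<Sum>v\<in>UNIV. m v)"

definition monos_of_deg :: "nat \<Rightarrow> mono set" where
  "monos_of_deg d = {m. mono_deg m = d}"

lemma sum_times_var:
  fixes f :: "var \<Rightarrow> 'a::comm_semiring_1"
  shows "(\<Sum>w\<in>UNIV. of_nat (times_var v m w) * f w) = (\<Sum>w\<in>UNIV. of_nat (m w) * f w) + f v"
proof -
  have "(\<Sum>w\<in>UNIV. of_nat (times_var v m w) * f w)
      = (\<Sum>w\<in>UNIV. of_nat (m w) * f w + (if w = v then f v else 0))"
    by (rule sum.cong) (auto simp: times_var_def algebra_simps)
  then show ?thesis
    by (simp add: sum.distrib)
qed

lemma times_var_same [simp]: "times_var v m v = Suc (m v)"
  by (simp add: times_var_def)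

lemma mono_deg_times_var [simp]: "mono_deg (times_var v m) = Suc (mono_deg m)"
  using sum_times_var[of v m "\<lambda>_. 1 :: nat"] by (simp add: mono_deg_def)

lemma times_var_commute: "times_var v (times_var w m) = times_var w (times_var v m)"
  by (auto simp: times_var_def fun_eq_iff)

lemma div_times_var [simp]: "div_var v (times_var v m) = m"
  by (auto simp: times_var_def div_var_def fun_eq_iff)

lemma times_var_eq_iff: "s = times_var v m \<longleftrightarrow> 0 < s v \<and> div_var v s = m"
  by (auto simp: times_var_def div_var_def fun_eq_iff)

lemma inj_times_var: "inj (times_var v)"
  by (metis div_times_var injI)

lemma finite_monos_of_deg: "finite (monos_of_deg d)"
proof (rule finite_subset)
  show "monos_of_deg d \<subseteq> {m. \<forall>v. (v \<in> UNIV \<longrightarrow> m v \<in> {..d}) \<and> (v \<notin> UNIV \<longrightarrow> m v = 0)}"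
    by (auto simp: monos_of_deg_def mono_deg_def intro: member_le_sum)
  show "finite {m :: mono. \<forall>v. (v \<in> UNIV \<longrightarrow> m v \<in> {..d}) \<and> (v \<notin> UNIV \<longrightarrow> m v = 0)}"
    by (rule finite_set_of_finite_funs) auto
qed

section \<open>Apolarity\<close>

datatype quad = QD | Q1 | Q2 | Q3 | Q4

fun quad_term :: "quad \<Rightarrow> nat \<Rightarrow> var \<times> var" where
  "quad_term QD k = [(X12, X34), (X13, X24), (X14, X23)] ! k"
| "quad_term Q1 k = [(X23, X4), (X24, X3), (X34, X2)] ! k"
| "quad_term Q2 k = [(X13, X4), (X14, X3), (X34, X1)] ! k"
| "quad_term Q3 k = [(X12, X4), (X14, X2), (X24, X1)] ! k"
| "quad_term Q4 k = [(X12, X3), (X13, X2), (X23, X1)] ! k"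

fun plucker_op :: "quad \<Rightarrow> cpoly \<Rightarrow> cpoly" where
  "plucker_op QD = opD"
| "plucker_op Q1 = opD1"
| "plucker_op Q2 = opD2"
| "plucker_op Q3 = opD3"
| "plucker_op Q4 = opD4"

definition term_mono :: "quad \<Rightarrow> nat \<Rightarrow> mono \<Rightarrow> mono" where
  "term_mono r k n = times_var (snd (quad_term r k)) (times_var (fst (quad_term r k)) n)"

lemma sum_three: "(\<Sum>k<3. f k) = f 0 + f 1 + (f (2::nat) :: 'a::comm_monoid_add)"
  by (simp add: numeral_3_eq_3 numeral_2_eq_2 add_ac)

lemma plucker_op_eq:
  "plucker_op r p m = (\<Sum>k<3. (-1) ^ k * pd (fst (quad_term r k)) (pd (snd (quad_term r k)) p) m)"
  by (cases r) (simp_all add: sum_three opD_def opD1_def opD2_def opD3_def opD4_def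
      padd_def psub_def pd2_def)

lemma mono_deg_term_mono [simp]: "mono_deg (term_mono r k n) = mono_deg n + 2"
  by (simp add: term_mono_def)

definition mono_fact :: "mono \<Rightarrow> complex" where
  "mono_fact m = (\<Prod>v\<in>UNIV. of_nat (fact (m v)))"

lemma mono_fact_times_var: "mono_fact (times_var v m) = of_nat (Suc (m v)) * mono_fact m"
proof -
  have "mono_fact (times_var v m)
      = (\<Prod>w\<in>UNIV. (if w = v then of_nat (Suc (m v)) else 1) * of_nat (fact (m w)))"
    unfolding mono_fact_def by (rule prod.cong) (auto simp: times_var_def)
  then show ?thesis
    by (simp add: prod.distrib mono_fact_def)
qed

lemma mono_fact_nonzero: "mono_fact m \<noteq> 0"
  by (simp add: mono_fact_def)

definition fact_scaled :: "cpoly \<Rightarrow> cpoly" where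
  "fact_scaled p m = mono_fact m * p m"

lemma pd_eq_times_var: "pd v p m = of_nat (Suc (m v)) * p (times_var v m)"
  by (simp add: pd_def times_var_def)

lemma fact_scaled_pd: "fact_scaled (pd v p) m = fact_scaled p (times_var v m)"
  by (simp add: fact_scaled_def pd_eq_times_var mono_fact_times_var)

lemma fact_scaled_plucker_op:
  "fact_scaled (plucker_op r p) n = (\<Sum>k<3. (-1) ^ k * fact_scaled p (term_mono r k n))"
proof -
  have "fact_scaled (plucker_op r p) n
      = (\<Sum>k<3. (-1) ^ k * fact_scaled (pd (fst (quad_term r k)) (pd (snd (quad_term r k)) p)) n)"
    by (simp add: fact_scaled_def plucker_op_eq sum_distrib_left algebra_simps)
  then show ?thesis
    by (simp add: fact_scaled_pd term_mono_def)
qed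

definition vanishes_on_quadrics :: "(mono \<Rightarrow> 'a::comm_ring_1) \<Rightarrow> bool" where
  "vanishes_on_quadrics L \<longleftrightarrow> (\<forall>r n. (\<Sum>k<3. (-1) ^ k * L (term_mono r k n)) = 0)"

lemma fact_scaled_eq_iff: "fact_scaled p = fact_scaled q \<longleftrightarrow> p = q"
  by (auto simp: fact_scaled_def mono_fact_nonzero fun_eq_iff)

lemma fact_scaled_divide: "fact_scaled (\<lambda>m. L m / mono_fact m) = L"
  by (simp add: fact_scaled_def mono_fact_nonzero fun_eq_iff)

lemma fact_scaled_in_polys_iff: "fact_scaled p \<in> polys \<longleftrightarrow> p \<in> polys"
  by (simp add: polys_def fact_scaled_def mono_fact_nonzero)

lemma pd_eq_iff_fact_scaled:
  "pd v q = p \<longleftrightarrow> (\<forall>m. fact_scaled q (times_var v m) = fact_scaled p m)"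
  by (metis fact_scaled_eq_iff fact_scaled_pd ext)

lemma plucker_ops_zero_iff:
  "(\<forall>r. plucker_op r p = (\<lambda>_. 0)) \<longleftrightarrow> vanishes_on_quadrics (fact_scaled p)"
proof -
  have "plucker_op r p = (\<lambda>_. 0) \<longleftrightarrow> (\<forall>n. fact_scaled (plucker_op r p) n = 0)" for r
    by (auto simp: fact_scaled_def mono_fact_nonzero fun_eq_iff)
  then show ?thesis
    by (simp add: vanishes_on_quadrics_def fact_scaled_plucker_op)
qed

definition monomial :: "mono \<Rightarrow> cpoly" where
  "monomial m s = (if s = m then 1 else 0)"

lemma monomial_mult: "monomial m s * x = (if s = m then x else 0)"
  by (simp add: monomial_def)

definition scale_coeffs :: "complex \<Rightarrow> cpoly \<Rightarrow> cpoly" where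
  "scale_coeffs c p m = c * p m"

interpretation coeffs: module scale_coeffs
  by standard (simp_all add: scale_coeffs_def fun_eq_iff algebra_simps)

definition quad_multiple :: "mono \<Rightarrow> quad \<Rightarrow> cpoly" where
  "quad_multiple n r s = (\<Sum>k<3. (-1) ^ k * monomial (term_mono r k n) s)"

definition quad_ideal :: "nat \<Rightarrow> cpoly set" where
  "quad_ideal d = coeffs.span {quad_multiple n r | n r. mono_deg n + 2 = d}"

lemma quad_multiple_in_quad_ideal: "quad_multiple n r \<in> quad_ideal (mono_deg n + 2)"
  unfolding quad_ideal_def by (rule coeffs.span_base) blast

lemma subspace_quad_ideal: "coeffs.subspace (quad_ideal d)"
  unfolding quad_ideal_def by (rule coeffs.subspace_span)

lemma quad_ideal_support:
  assumes "f \<in> quad_ideal d" and "f s \<noteq> 0"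
  shows "s \<in> monos_of_deg d"
proof -
  have "\<forall>s. f s \<noteq> 0 \<longrightarrow> s \<in> monos_of_deg d"
    using assms(1) unfolding quad_ideal_def
  proof (induction rule: coeffs.span_induct_alt)
    case base
    then show ?case by simp
  next
    case (step c q g)
    then obtain n r where "q = quad_multiple n r" "mono_deg n + 2 = d"
      by blast
    then have q_support: "q s \<noteq> 0 \<Longrightarrow> s \<in> monos_of_deg d" for s
      by (auto simp: quad_multiple_def monomial_def monos_of_deg_def sum_three split: if_splits)
    show ?case
    proof (intro allI impI)
      fix s
      assume "(scale_coeffs c q + g) s \<noteq> 0"
      then have "q s \<noteq> 0 \<or> g s \<noteq> 0"
        by (auto simp: scale_coeffs_def)
      then show "s \<in> monos_of_deg d"
        using q_support step.IH by blast
    qed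
  qed
  with assms(2) show ?thesis by blast
qed

locale scalar_hom =
  fixes h :: "complex \<Rightarrow> 'a::comm_ring_1"
  assumes hom_add: "h (x + y) = h x + h y"
    and hom_mult: "h (x * y) = h x * h y"
    and hom_one: "h 1 = 1"
begin

lemma hom_zero: "h 0 = 0"
  using hom_add[of 0 0] by simp

lemma hom_sign: "h ((-1) ^ k) = (-1) ^ k"
proof -
  have "h (-1) = -1"
    using hom_add[of "-1" 1] by (simp add: hom_zero hom_one eq_neg_iff_add_eq_0)
  moreover have "h (x ^ k) = h x ^ k" for x
    by (induction k) (simp_all add: hom_one hom_mult)
  ultimately show ?thesis
    by simp
qed

lemma hom_sum: "h (\<Sum>k\<in>K. g k) = (\<Sum>k\<in>K. h (g k))"
  by (induction K rule: infinite_finite_induct) (simp_all add: hom_zero hom_add)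

lemma quad_multiple_pairing:
  assumes "vanishes_on_quadrics L" and "mono_deg n + 2 = d"
  shows "(\<Sum>s\<in>monos_of_deg d. h (quad_multiple n r s) * L s) = 0"
proof -
  have hom_monomial: "h (monomial m s) * x = (if s = m then x else 0)" for m s x
    by (simp add: monomial_def hom_zero hom_one)
  have "(\<Sum>s\<in>monos_of_deg d. h (quad_multiple n r s) * L s)
      = (\<Sum>s\<in>monos_of_deg d. \<Sum>k<3. (-1) ^ k * (if s = term_mono r k n then L s else 0))"
    by (simp add: quad_multiple_def hom_sum hom_mult hom_sign sum_distrib_right mult.assoc
        hom_monomial)
  also have "\<dots> = (\<Sum>k<3. \<Sum>s\<in>monos_of_deg d. (-1) ^ k * (if s = term_mono r k n then L s else 0))"
    by (rule sum.swap)
  also have "\<dots> = (\<Sum>k<3. (-1) ^ k * L (term_mono r k n))"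
  proof -
    have "term_mono r k n \<in> monos_of_deg d" for k
      using assms(2) by (simp add: monos_of_deg_def)
    then show ?thesis
      by (simp add: finite_monos_of_deg sum.delta' flip: sum_distrib_left)
  qed
  also have "\<dots> = 0"
    using assms(1) by (simp add: vanishes_on_quadrics_def)
  finally show ?thesis .
qed

lemma quad_ideal_pairing:
  assumes L: "vanishes_on_quadrics L" and f: "f \<in> quad_ideal d"
  shows "(\<Sum>s\<in>monos_of_deg d. h (f s) * L s) = 0"
  using f unfolding quad_ideal_def
proof (induction rule: coeffs.span_induct_alt)
  case base
  then show ?case by (simp add: hom_zero)
next
  case (step c q g)
  then obtain n r where "q = quad_multiple n r" "mono_deg n + 2 = d"
    by blast
  then have "(\<Sum>s\<in>monos_of_deg d. h (q s) * L s) = 0"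
    using quad_multiple_pairing[OF L] by blast
  moreover have "(\<Sum>s\<in>monos_of_deg d. h (scale_coeffs c q s + g s) * L s)
      = h c * (\<Sum>s\<in>monos_of_deg d. h (q s) * L s) + (\<Sum>s\<in>monos_of_deg d. h (g s) * L s)"
    by (simp add: scale_coeffs_def hom_add hom_mult sum.distrib sum_distrib_left algebra_simps)
  ultimately show ?case
    using step.IH by simp
qed

end

interpretation complex_scalars: scalar_hom "\<lambda>x :: complex. x"
  by standard simp_all

interpretation constant_polys: scalar_hom "\<lambda>c :: complex. [:c:]"
  by standard (simp_all add: pCons_one)

section \<open>Pluecker coordinates\<close>

fun var_index :: "var \<Rightarrow> nat \<times> nat" where
  "var_index X1 = (1, 5)"
| "var_index X2 = (2, 5)"
| "var_index X3 = (3, 5)"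
| "var_index X4 = (4, 5)"
| "var_index X12 = (1, 2)"
| "var_index X13 = (1, 3)"
| "var_index X14 = (1, 4)"
| "var_index X23 = (2, 3)"
| "var_index X24 = (2, 4)"
| "var_index X34 = (3, 4)"

definition plucker_coord :: "(nat \<Rightarrow> 'a::comm_ring_1) \<Rightarrow> (nat \<Rightarrow> 'a) \<Rightarrow> var \<Rightarrow> 'a" where
  "plucker_coord u w v = (case var_index v of (i, j) \<Rightarrow> u i * w j - u j * w i)"

definition plucker_mono :: "(nat \<Rightarrow> 'a::comm_ring_1) \<Rightarrow> (nat \<Rightarrow> 'a) \<Rightarrow> mono \<Rightarrow> 'a" where
  "plucker_mono u w m = (\<Prod>v\<in>UNIV. plucker_coord u w v ^ m v)"

lemma plucker_mono_times_var:
  "plucker_mono u w (times_var v m) = plucker_coord u w v * plucker_mono u w m"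
proof -
  have "plucker_mono u w (times_var v m)
      = (\<Prod>x\<in>UNIV. (if x = v then plucker_coord u w v else 1) * plucker_coord u w x ^ m x)"
    unfolding plucker_mono_def by (rule prod.cong) (auto simp: times_var_def)
  then show ?thesis
    by (simp add: prod.distrib plucker_mono_def)
qed

lemma plucker_relation:
  "(\<Sum>k<3. (-1) ^ k * (plucker_coord u w (fst (quad_term r k)) * plucker_coord u w (snd (quad_term r k)))) = 0"
  by (cases r) (simp_all add: sum_three plucker_coord_def algebra_simps)

lemma vanishes_on_quadrics_plucker_mono: "vanishes_on_quadrics (plucker_mono u w)"
  unfolding vanishes_on_quadrics_def
proof (intro allI)
  fix r n
  have "(\<Sum>k<3. (-1) ^ k * plucker_mono u w (term_mono r k n))
      = plucker_mono u w n * (\<Sum>k<3. (-1) ^ k * (plucker_coord u w (fst (quad_term r k)) *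
          plucker_coord u w (snd (quad_term r k))))"
    by (simp add: term_mono_def plucker_mono_times_var sum_distrib_left algebra_simps)
  then show "(\<Sum>k<3. (-1) ^ k * plucker_mono u w (term_mono r k n)) = 0"
    by (simp add: plucker_relation)
qed

section \<open>Nonnesting monomials\<close>

text \<open>An order \<open>\<sigma>\<close> of the indices turns each variable into a chord \<open>lo \<sigma> v < hi \<sigma> v\<close>
  between two of the points \<open>0, \<dots>, 4\<close>.\<close>

definition lo :: "(nat \<Rightarrow> nat) \<Rightarrow> var \<Rightarrow> nat" where
  "lo \<sigma> v = min (\<sigma> (fst (var_index v))) (\<sigma> (snd (var_index v)))"

definition hi :: "(nat \<Rightarrow> nat) \<Rightarrow> var \<Rightarrow> nat" where
  "hi \<sigma> v = max (\<sigma> (fst (var_index v))) (\<sigma> (snd (var_index v)))"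

definition nested :: "(nat \<Rightarrow> nat) \<Rightarrow> var \<Rightarrow> var \<Rightarrow> bool" where
  "nested \<sigma> v w \<longleftrightarrow> lo \<sigma> v < lo \<sigma> w \<and> hi \<sigma> w < hi \<sigma> v"

definition nonnesting :: "(nat \<Rightarrow> nat) \<Rightarrow> mono \<Rightarrow> bool" where
  "nonnesting \<sigma> m \<longleftrightarrow> (\<forall>v w. nested \<sigma> v w \<longrightarrow> m v = 0 \<or> m w = 0)"

definition lo_count :: "(nat \<Rightarrow> nat) \<Rightarrow> mono \<Rightarrow> nat \<Rightarrow> nat" where
  "lo_count \<sigma> m j = (\<Sum>v | lo \<sigma> v = j. m v)"

definition hi_count :: "(nat \<Rightarrow> nat) \<Rightarrow> mono \<Rightarrow> nat \<Rightarrow> nat" where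
  "hi_count \<sigma> m j = (\<Sum>v | hi \<sigma> v = j. m v)"

definition lo_hi_below :: "(nat \<Rightarrow> nat) \<Rightarrow> mono \<Rightarrow> nat \<Rightarrow> nat \<Rightarrow> nat" where
  "lo_hi_below \<sigma> m a b = (\<Sum>v | lo \<sigma> v < a \<and> hi \<sigma> v < b. m v)"

lemma sum_filter_split:
  fixes f :: "'a::finite \<Rightarrow> 'b::comm_monoid_add"
  shows "(\<Sum>x | P x. f x) = (\<Sum>x | P x \<and> Q x. f x) + (\<Sum>x | P x \<and> \<not> Q x. f x)"
proof -
  have "{x. P x} = {x. P x \<and> Q x} \<union> {x. P x \<and> \<not> Q x}"
    by blast
  then show ?thesis
    by (simp add: sum.union_disjoint[symmetric] disjoint_iff)
qed

lemma sum_filter_eq_sum_if: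
  fixes f :: "'a::finite \<Rightarrow> 'b::comm_monoid_add"
  shows "(\<Sum>x | P x. f x) = (\<Sum>x\<in>UNIV. if P x then f x else 0)"
  using sum.inter_filter[of UNIV f P] by simp

lemma sum_below_Suc:
  fixes c :: "var \<Rightarrow> nat"
  shows "(\<Sum>v | c v < Suc a. m v) = (\<Sum>v | c v < a. m v) + (\<Sum>v | c v = a. m v)"
proof -
  have "{v. c v < Suc a} = {v. c v < a} \<union> {v. c v = a}"
    by auto
  then show ?thesis
    by (simp add: sum.union_disjoint disjoint_iff)
qed

lemma sum_below_eq_sum_counts:
  fixes c :: "var \<Rightarrow> nat"
  shows "(\<Sum>v | c v < a. m v) = (\<Sum>j<a. \<Sum>v | c v = j. m v)"
  by (induction a) (simp_all add: sum_below_Suc)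

text \<open>A chord with \<open>lo < a\<close>, \<open>hi \<ge> b\<close> and one with \<open>lo \<ge> a\<close>, \<open>hi < b\<close> are nested,
  so in a nonnesting monomial one of the two sets of chords below contains the other.\<close>

lemma lo_hi_below_nonnesting:
  assumes "nonnesting \<sigma> m"
  shows "lo_hi_below \<sigma> m a b
      = min (\<Sum>v | lo \<sigma> v < a. m v) (\<Sum>v | hi \<sigma> v < b. m v)"
proof -
  define X where "X = (\<Sum>v | lo \<sigma> v < a \<and> \<not> hi \<sigma> v < b. m v)"
  define Y where "Y = (\<Sum>v | hi \<sigma> v < b \<and> \<not> lo \<sigma> v < a. m v)"
  have lo_split: "(\<Sum>v | lo \<sigma> v < a. m v) = lo_hi_below \<sigma> m a b + X"
    unfolding X_def lo_hi_below_def by (rule sum_filter_split)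
  have hi_split: "(\<Sum>v | hi \<sigma> v < b. m v) = lo_hi_below \<sigma> m a b + Y"
    unfolding Y_def lo_hi_below_def
    using sum_filter_split[where P = "\<lambda>v. hi \<sigma> v < b" and Q = "\<lambda>v. lo \<sigma> v < a" and f = m]
    by (simp add: conj_commute)
  have "X = 0 \<or> Y = 0"
  proof (rule ccontr)
    assume "\<not> (X = 0 \<or> Y = 0)"
    then obtain v w where v: "lo \<sigma> v < a" "\<not> hi \<sigma> v < b" "m v \<noteq> 0"
      and w: "hi \<sigma> w < b" "\<not> lo \<sigma> w < a" "m w \<noteq> 0"
      unfolding X_def Y_def by (auto dest: sum.not_neutral_contains_not_neutral)
    then have "nested \<sigma> v w"
      by (simp add: nested_def)
    then have "m v = 0 \<or> m w = 0"
      using assms by (simp add: nonnesting_def)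
    with v(3) w(3) show False
      by simp
  qed
  with lo_split hi_split show ?thesis
    by auto
qed

lemma var_index_bounds:
  "fst (var_index v) < snd (var_index v)" "fst (var_index v) \<in> {1..5}" "snd (var_index v) \<in> {1..5}"
  by (cases v; simp)+

lemma inj_var_index: "inj var_index"
  unfolding inj_def by (intro allI; case_tac x; case_tac y; simp)

locale index_order =
  fixes \<sigma> :: "nat \<Rightarrow> nat"
  assumes inj_order: "inj_on \<sigma> {1..5}"
    and order_range: "\<sigma> ` {1..5} \<subseteq> {..<5}"
begin

lemma lo_less_hi: "lo \<sigma> v < hi \<sigma> v"
proof -
  have "\<sigma> (fst (var_index v)) \<noteq> \<sigma> (snd (var_index v))"
    using var_index_bounds[of v] inj_order by (auto dest: inj_onD)
  then show ?thesis
    by (simp add: lo_def hi_def)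
qed

lemma hi_less: "hi \<sigma> v < 5"
  using var_index_bounds(2,3)[of v] order_range by (auto simp: hi_def image_subset_iff)

lemma lo_hi_inj:
  assumes "lo \<sigma> v = lo \<sigma> w" and "hi \<sigma> v = hi \<sigma> w"
  shows "v = w"
proof -
  obtain i j i' j' where v: "var_index v = (i, j)" and w: "var_index w = (i', j')"
    by fastforce
  have ij: "i < j" "i' < j'" "{i, j} \<subseteq> {1..5}" "{i', j'} \<subseteq> {1..5}"
    using var_index_bounds[of v] var_index_bounds[of w] v w by auto
  have "\<sigma> ` {i, j} = {lo \<sigma> v, hi \<sigma> v}" "\<sigma> ` {i', j'} = {lo \<sigma> w, hi \<sigma> w}"
    using v w by (auto simp: lo_def hi_def min_def max_def)
  then have "\<sigma> ` {i, j} = \<sigma> ` {i', j'}"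
    using assms by simp
  then have "{i, j} = {i', j'}"
    using inj_on_image_eq_iff[OF inj_order ij(3,4)] by blast
  with ij have "var_index v = var_index w"
    unfolding v w by (auto simp: doubleton_eq_iff)
  then show ?thesis
    using inj_var_index by (simp add: inj_eq)
qed

text \<open>Inclusion-exclusion over the corner \<open>(lo \<sigma> v, hi \<sigma> v)\<close> isolates the chord \<open>v\<close>.\<close>

lemma exponent_by_lo_hi_below:
  "m v + lo_hi_below \<sigma> m (lo \<sigma> v) (Suc (hi \<sigma> v)) + lo_hi_below \<sigma> m (Suc (lo \<sigma> v)) (hi \<sigma> v)
    = lo_hi_below \<sigma> m (Suc (lo \<sigma> v)) (Suc (hi \<sigma> v)) + lo_hi_below \<sigma> m (lo \<sigma> v) (hi \<sigma> v)"
proof -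
  have "(if x = v then m v else 0)
      + (if lo \<sigma> x < lo \<sigma> v \<and> hi \<sigma> x < Suc (hi \<sigma> v) then m x else 0)
      + (if lo \<sigma> x < Suc (lo \<sigma> v) \<and> hi \<sigma> x < hi \<sigma> v then m x else 0)
    = (if lo \<sigma> x < Suc (lo \<sigma> v) \<and> hi \<sigma> x < Suc (hi \<sigma> v) then m x else 0)
      + (if lo \<sigma> x < lo \<sigma> v \<and> hi \<sigma> x < hi \<sigma> v then m x else 0)" for x
    using lo_hi_inj[of x v] by (cases "x = v") auto
  then have "(\<Sum>x\<in>UNIV. (if x = v then m v else 0)
      + (if lo \<sigma> x < lo \<sigma> v \<and> hi \<sigma> x < Suc (hi \<sigma> v) then m x else 0)
      + (if lo \<sigma> x < Suc (lo \<sigma> v) \<and> hi \<sigma> x < hi \<sigma> v then m x else 0))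
    = (\<Sum>x\<in>UNIV. (if lo \<sigma> x < Suc (lo \<sigma> v) \<and> hi \<sigma> x < Suc (hi \<sigma> v) then m x else 0)
      + (if lo \<sigma> x < lo \<sigma> v \<and> hi \<sigma> x < hi \<sigma> v then m x else 0))"
    by presburger
  then show ?thesis
    by (simp add: lo_hi_below_def sum_filter_eq_sum_if sum.distrib)
qed

lemma nonnesting_eqI:
  assumes "nonnesting \<sigma> m" and "nonnesting \<sigma> m'"
    and "\<And>j. lo_count \<sigma> m j = lo_count \<sigma> m' j" and "\<And>j. hi_count \<sigma> m j = hi_count \<sigma> m' j"
  shows "m = m'"
proof
  fix v
  have "lo_hi_below \<sigma> m a b = lo_hi_below \<sigma> m' a b" for a b
    using assms by (simp add: lo_hi_below_nonnesting sum_below_eq_sum_counts[where c = "lo \<sigma>"]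
        sum_below_eq_sum_counts[where c = "hi \<sigma>"] flip: lo_count_def hi_count_def)
  then show "m v = m' v"
    using exponent_by_lo_hi_below[of m v] exponent_by_lo_hi_below[of m' v] by simp
qed

end

section \<open>Independence of nonnesting monomials modulo the quadrics\<close>

lemma base_expansion_unique:
  fixes c c' :: "nat \<Rightarrow> nat"
  assumes "\<And>i. i < n \<Longrightarrow> c i < M" and "\<And>i. i < n \<Longrightarrow> c' i < M"
    and "(\<Sum>i<n. c i * M ^ i) + M ^ n * x = (\<Sum>i<n. c' i * M ^ i) + M ^ n * x'"
  shows "(\<forall>i<n. c i = c' i) \<and> x = x'"
  using assms
proof (induction n arbitrary: c c')
  case 0
  then show ?case by simp
next
  case (Suc n)
  have split: "(\<Sum>i<Suc n. f i * M ^ i) + M ^ Suc n * y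
      = f 0 + M * ((\<Sum>i<n. f (Suc i) * M ^ i) + M ^ n * y)" for f y
    by (subst sum.lessThan_Suc_shift) (simp add: sum_distrib_left algebra_simps)
  define X where "X = (\<Sum>i<n. c (Suc i) * M ^ i) + M ^ n * x"
  define X' where "X' = (\<Sum>i<n. c' (Suc i) * M ^ i) + M ^ n * x'"
  have eq: "c 0 + M * X = c' 0 + M * X'"
    using Suc.prems(3) unfolding split X_def X'_def .
  have "c 0 < M" "c' 0 < M"
    using Suc.prems(1,2) by auto
  then have "(c 0 + M * X) mod M = c 0" "(c' 0 + M * X') mod M = c' 0"
    by simp_all
  then have c0: "c 0 = c' 0"
    using eq by simp
  with eq \<open>c 0 < M\<close> have "X = X'"
    by simp
  then have "(\<forall>i<n. c (Suc i) = c' (Suc i)) \<and> x = x'"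
    unfolding X_def X'_def by (intro Suc.IH) (use Suc.prems in auto)
  with c0 show ?case
    by (auto simp: less_Suc_eq_0_disj)
qed

definition weight :: "(nat \<Rightarrow> nat) \<Rightarrow> nat \<Rightarrow> mono \<Rightarrow> nat" where
  "weight \<sigma> M m = (\<Sum>v\<in>UNIV. m v * (M ^ lo \<sigma> v + M ^ (5 + hi \<sigma> v)))"

lemma sum_group_by_value:
  fixes c :: "var \<Rightarrow> nat" and g :: "nat \<Rightarrow> nat"
  assumes "\<And>v. c v < n"
  shows "(\<Sum>v\<in>UNIV. m v * g (c v)) = (\<Sum>j<n. (\<Sum>v | c v = j. m v) * g j)"
proof -
  have "(\<Sum>j<n. (\<Sum>v | c v = j. m v) * g j) = (\<Sum>j<n. \<Sum>v | v \<in> UNIV \<and> c v = j. m v * g (c v))"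
    by (simp add: sum_distrib_right)
  also have "\<dots> = (\<Sum>v\<in>UNIV. m v * g (c v))"
    using assms by (intro sum.group) auto
  finally show ?thesis ..
qed

lemma count_le_mono_deg: "(\<Sum>v | P v. m v) \<le> mono_deg m"
  unfolding mono_deg_def by (rule sum_mono2) auto

context index_order
begin

lemma weight_expansion:
  "weight \<sigma> M m = (\<Sum>j<5. lo_count \<sigma> m j * M ^ j) + M ^ 5 * (\<Sum>j<5. hi_count \<sigma> m j * M ^ j)"
proof -
  have "lo \<sigma> v < 5" "hi \<sigma> v < 5" for v
    using lo_less_hi[of v] hi_less[of v] by simp_all
  then have "(\<Sum>v\<in>UNIV. m v * M ^ lo \<sigma> v) = (\<Sum>j<5. lo_count \<sigma> m j * M ^ j)"
    and "(\<Sum>v\<in>UNIV. m v * M ^ hi \<sigma> v) = (\<Sum>j<5. hi_count \<sigma> m j * M ^ j)"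
    unfolding lo_count_def hi_count_def by (simp_all add: sum_group_by_value)
  moreover have "weight \<sigma> M m = (\<Sum>v\<in>UNIV. m v * M ^ lo \<sigma> v) + M ^ 5 * (\<Sum>v\<in>UNIV. m v * M ^ hi \<sigma> v)"
    by (simp add: weight_def power_add distrib_left sum.distrib sum_distrib_left mult.left_commute)
  ultimately show ?thesis
    by simp
qed

lemma weight_inj:
  assumes "nonnesting \<sigma> m" "nonnesting \<sigma> m'" "mono_deg m < M" "mono_deg m' < M"
    and "weight \<sigma> M m = weight \<sigma> M m'"
  shows "m = m'"
proof (rule nonnesting_eqI[OF assms(1,2)])
  have bounded: "lo_count \<sigma> m j < M" "hi_count \<sigma> m j < M"
    "lo_count \<sigma> m' j < M" "hi_count \<sigma> m' j < M" for j
    using count_le_mono_deg assms(3,4) unfolding lo_count_def hi_count_def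
    by (meson le_less_trans)+
  have "(\<forall>j<5. lo_count \<sigma> m j = lo_count \<sigma> m' j) \<and>
      (\<Sum>j<5. hi_count \<sigma> m j * M ^ j) = (\<Sum>j<5. hi_count \<sigma> m' j * M ^ j)"
    using assms(5) by (intro base_expansion_unique) (simp_all add: bounded weight_expansion)
  moreover have "\<forall>j<5. hi_count \<sigma> m j = hi_count \<sigma> m' j"
    using base_expansion_unique[of 5 "hi_count \<sigma> m" M "hi_count \<sigma> m'" 0 0] calculation
    by (simp add: bounded)
  moreover have "lo_count \<sigma> p j = 0" "hi_count \<sigma> p j = 0" if "5 \<le> j" for p j
    using that lo_less_hi hi_less unfolding lo_count_def hi_count_def
    by (metis (mono_tags, lifting) empty_Collect_eq not_less order.strict_trans sum.empty)+
  ultimately show "lo_count \<sigma> m j = lo_count \<sigma> m' j" "hi_count \<sigma> m j = hi_count \<sigma> m' j" for j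
    by (metis not_less)+
qed

end

lemma degree_monom_diff:
  assumes "b < a"
  shows "degree (monom (1::complex) a - monom 1 b) = a"
proof -
  have "degree (monom (1::complex) a + - monom 1 b) = a"
    using assms by (subst degree_add_eq_left) (simp_all add: degree_monom_eq)
  then show ?thesis
    by simp
qed

lemma exponent_swap_less:
  fixes M :: nat
  assumes "2 \<le> M" and "a < b"
  shows "M ^ b + M ^ (5 + a) < M ^ a + M ^ (5 + b)"
proof -
  define t where "t = M ^ b - M ^ a"
  have "M ^ a < M ^ b"
    using assms by (intro power_strict_increasing) auto
  then have t: "M ^ b = M ^ a + t" "0 < t"
    unfolding t_def by simp_all
  have "1 < M ^ 5"
    using assms by (intro one_less_power) auto
  with t(2) have "t < M ^ 5 * t"
    by simp
  then show ?thesis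
    by (simp add: power_add t algebra_simps)
qed

text \<open>Pluecker coordinates of the \<open>2 \<times> 5\<close> matrix with rows \<open>t ^ (M ^ \<sigma> i)\<close> and
  \<open>t ^ (M ^ (5 + \<sigma> i))\<close>: each variable becomes a binomial in \<open>t\<close> whose degree records
  the two ends of its chord as digits in base \<open>M\<close>.\<close>

definition test_eval :: "(nat \<Rightarrow> nat) \<Rightarrow> nat \<Rightarrow> mono \<Rightarrow> complex poly" where
  "test_eval \<sigma> M = plucker_mono (\<lambda>i. monom 1 (M ^ \<sigma> i)) (\<lambda>i. monom 1 (M ^ (5 + \<sigma> i)))"

context index_order
begin

lemma degree_test_coord:
  fixes v :: var
  assumes "2 \<le> M"
  defines "p \<equiv> plucker_coord (\<lambda>i. monom (1::complex) (M ^ \<sigma> i)) (\<lambda>i. monom 1 (M ^ (5 + \<sigma> i))) v"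
  shows "p \<noteq> 0" and "degree p = M ^ lo \<sigma> v + M ^ (5 + hi \<sigma> v)"
proof -
  obtain i j where ij: "var_index v = (i, j)"
    by fastforce
  have p: "p = monom 1 (M ^ \<sigma> i + M ^ (5 + \<sigma> j)) - monom 1 (M ^ \<sigma> j + M ^ (5 + \<sigma> i))"
    by (simp add: p_def plucker_coord_def ij mult_monom)
  have "lo \<sigma> v < hi \<sigma> v"
    by (rule lo_less_hi)
  then have "\<sigma> i < \<sigma> j \<and> lo \<sigma> v = \<sigma> i \<and> hi \<sigma> v = \<sigma> j \<or> \<sigma> j < \<sigma> i \<and> lo \<sigma> v = \<sigma> j \<and> hi \<sigma> v = \<sigma> i"
    by (auto simp: lo_def hi_def ij min_def max_def)
  then show "degree p = M ^ lo \<sigma> v + M ^ (5 + hi \<sigma> v)"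
  proof
    assume *: "\<sigma> i < \<sigma> j \<and> lo \<sigma> v = \<sigma> i \<and> hi \<sigma> v = \<sigma> j"
    then have "M ^ \<sigma> j + M ^ (5 + \<sigma> i) < M ^ \<sigma> i + M ^ (5 + \<sigma> j)"
      using exponent_swap_less[OF assms(1)] by blast
    then have "degree p = M ^ \<sigma> i + M ^ (5 + \<sigma> j)"
      unfolding p by (rule degree_monom_diff)
    with * show ?thesis
      by simp
  next
    assume *: "\<sigma> j < \<sigma> i \<and> lo \<sigma> v = \<sigma> j \<and> hi \<sigma> v = \<sigma> i"
    then have "M ^ \<sigma> i + M ^ (5 + \<sigma> j) < M ^ \<sigma> j + M ^ (5 + \<sigma> i)"
      using exponent_swap_less[OF assms(1)] by blast
    then have "degree (- p) = M ^ \<sigma> j + M ^ (5 + \<sigma> i)"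
      unfolding p minus_diff_eq by (rule degree_monom_diff)
    with * show ?thesis
      by simp
  qed
  moreover have "0 < M ^ lo \<sigma> v"
    using assms(1) by simp
  ultimately show "p \<noteq> 0"
    by auto
qed

lemma test_eval_nonzero_degree:
  assumes "2 \<le> M"
  shows "test_eval \<sigma> M m \<noteq> 0" and "degree (test_eval \<sigma> M m) = weight \<sigma> M m"
  using degree_test_coord[OF assms]
  by (simp_all add: test_eval_def plucker_mono_def weight_def degree_prod_eq_sum_degree
      degree_power_eq)

end

lemma lin_indep_distinct_degrees:
  fixes p :: "'b \<Rightarrow> complex poly"
  assumes "finite A" and "\<And>s. s \<in> A \<Longrightarrow> p s \<noteq> 0" and "inj_on (\<lambda>s. degree (p s)) A"
    and "(\<Sum>s\<in>A. smult (c s) (p s)) = 0"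
  shows "\<forall>s\<in>A. c s = 0"
proof (rule ccontr)
  assume "\<not> (\<forall>s\<in>A. c s = 0)"
  define B where "B = {s\<in>A. c s \<noteq> 0}"
  have "B \<noteq> {}" "finite B"
    using \<open>\<not> (\<forall>s\<in>A. c s = 0)\<close> assms(1) by (auto simp: B_def)
  define D where "D = Max ((\<lambda>s. degree (p s)) ` B)"
  have "D \<in> (\<lambda>s. degree (p s)) ` B"
    unfolding D_def using \<open>B \<noteq> {}\<close> \<open>finite B\<close> by (intro Max_in) auto
  then obtain s0 where s0: "s0 \<in> B" "degree (p s0) = D"
    by auto
  have "c s * coeff (p s) D = 0" if "s \<in> A" "s \<noteq> s0" for s
  proof (cases "c s = 0")
    case False
    then have "s \<in> B"
      using that by (simp add: B_def)
    then have "degree (p s) \<le> D"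
      using \<open>finite B\<close> by (simp add: D_def)
    moreover have "degree (p s) \<noteq> D"
      using assms(3) that s0 by (auto simp: B_def inj_on_def)
    ultimately show ?thesis
      by (simp add: coeff_eq_0)
  qed simp
  then have "(\<Sum>s\<in>A - {s0}. c s * coeff (p s) D) = 0"
    by (intro sum.neutral) auto
  moreover have "s0 \<in> A"
    using s0(1) by (simp add: B_def)
  ultimately have "coeff (\<Sum>s\<in>A. smult (c s) (p s)) D = c s0 * coeff (p s0) D"
    using assms(1) by (simp add: coeff_sum sum.remove)
  moreover have "c s0 \<noteq> 0" "coeff (p s0) D \<noteq> 0"
    using s0 assms(2) by (auto simp: B_def)
  ultimately show False
    using assms(4) by simp
qed

context index_order
begin

lemma inj_on_degree_test_eval:
  assumes "2 \<le> M" and "d < M"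
  shows "inj_on (\<lambda>s. degree (test_eval \<sigma> M s)) {s \<in> monos_of_deg d. nonnesting \<sigma> s}"
proof (rule inj_onI)
  fix s s'
  assume s: "s \<in> {s \<in> monos_of_deg d. nonnesting \<sigma> s}" "s' \<in> {s \<in> monos_of_deg d. nonnesting \<sigma> s}"
    and "degree (test_eval \<sigma> M s) = degree (test_eval \<sigma> M s')"
  then have "weight \<sigma> M s = weight \<sigma> M s'"
    using test_eval_nonzero_degree(2)[OF assms(1)] by metis
  moreover have "mono_deg s < M" "mono_deg s' < M" "nonnesting \<sigma> s" "nonnesting \<sigma> s'"
    using s assms(2) by (simp_all add: monos_of_deg_def)
  ultimately show "s = s'"
    using weight_inj by blast
qed

theorem nonnesting_quad_ideal_eq_0:
  assumes f: "f \<in> quad_ideal d" and nonnesting: "\<And>s. f s \<noteq> 0 \<Longrightarrow> nonnesting \<sigma> s"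
  shows "f = 0"
proof -
  define M where "M = d + 2"
  define A where "A = {s \<in> monos_of_deg d. nonnesting \<sigma> s}"
  have M: "2 \<le> M" "d < M"
    by (simp_all add: M_def)
  have "(\<Sum>s\<in>monos_of_deg d. [:f s:] * test_eval \<sigma> M s) = 0"
    using constant_polys.quad_ideal_pairing[OF vanishes_on_quadrics_plucker_mono f]
    by (simp add: test_eval_def)
  moreover have "(\<Sum>s\<in>monos_of_deg d. [:f s:] * test_eval \<sigma> M s) = (\<Sum>s\<in>A. smult (f s) (test_eval \<sigma> M s))"
  proof (rule sum.mono_neutral_cong_right)
    show "\<forall>s\<in>monos_of_deg d - A. [:f s:] * test_eval \<sigma> M s = 0"
      using nonnesting by (auto simp: A_def)
  qed (auto simp: A_def finite_monos_of_deg)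
  ultimately have "(\<Sum>s\<in>A. smult (f s) (test_eval \<sigma> M s)) = 0"
    by simp
  moreover have "finite A"
    unfolding A_def using finite_monos_of_deg by simp
  ultimately have zero_on_A: "\<forall>s\<in>A. f s = 0"
    using lin_indep_distinct_degrees test_eval_nonzero_degree(1)[OF M(1)]
      inj_on_degree_test_eval[OF M, folded A_def] by blast
  show "f = 0"
  proof
    fix s
    show "f s = 0 s"
    proof (rule ccontr)
      assume "f s \<noteq> 0 s"
      then have "s \<in> A"
        using nonnesting quad_ideal_support[OF f] by (simp add: A_def)
      with zero_on_A \<open>f s \<noteq> 0 s\<close> show False
        by simp
    qed
  qed
qed

end

section \<open>Straightening\<close>

lemma sum_fun_apply: "(\<Sum>j\<in>K. F j) x = (\<Sum>j\<in>K. F j x)"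
  by (induction K rule: infinite_finite_induct) simp_all

definition spread :: "(nat \<Rightarrow> nat) \<Rightarrow> var \<Rightarrow> nat" where
  "spread \<sigma> v = (hi \<sigma> v - lo \<sigma> v)\<^sup>2"

definition total_spread :: "(nat \<Rightarrow> nat) \<Rightarrow> mono \<Rightarrow> nat" where
  "total_spread \<sigma> m = (\<Sum>v\<in>UNIV. m v * spread \<sigma> v)"

lemma total_spread_times_var: "total_spread \<sigma> (times_var v m) = total_spread \<sigma> m + spread \<sigma> v"
  using sum_times_var[of v m "spread \<sigma>"] by (simp add: total_spread_def)

definition reduces_to :: "(nat \<Rightarrow> nat) \<Rightarrow> nat \<Rightarrow> cpoly \<Rightarrow> cpoly \<Rightarrow> bool" where
  "reduces_to \<sigma> d f g \<longleftrightarrow> (\<forall>s. g s \<noteq> 0 \<longrightarrow> nonnesting \<sigma> s) \<and> f - g \<in> quad_ideal d"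

definition reducible :: "(nat \<Rightarrow> nat) \<Rightarrow> nat \<Rightarrow> cpoly \<Rightarrow> bool" where
  "reducible \<sigma> d f \<longleftrightarrow> (\<exists>g. reduces_to \<sigma> d f g)"

lemma subspace_reducible: "coeffs.subspace {f. reducible \<sigma> d f}"
proof (rule coeffs.subspaceI)
  show "0 \<in> {f. reducible \<sigma> d f}"
    unfolding reducible_def reduces_to_def
    by (intro CollectI exI[of _ 0]) (simp add: coeffs.subspace_0[OF subspace_quad_ideal])
next
  fix f f'
  assume "f \<in> {f. reducible \<sigma> d f}" "f' \<in> {f. reducible \<sigma> d f}"
  then obtain g g' where g: "\<forall>s. g s \<noteq> 0 \<longrightarrow> nonnesting \<sigma> s" "f - g \<in> quad_ideal d"
    and g': "\<forall>s. g' s \<noteq> 0 \<longrightarrow> nonnesting \<sigma> s" "f' - g' \<in> quad_ideal d"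
    by (auto simp: reducible_def reduces_to_def)
  have "\<forall>s. (g + g') s \<noteq> 0 \<longrightarrow> nonnesting \<sigma> s"
    using g(1) g'(1) by (metis add_0 plus_fun_apply)
  moreover have "f + f' - (g + g') \<in> quad_ideal d"
    unfolding add_diff_add by (rule coeffs.subspace_add[OF subspace_quad_ideal g(2) g'(2)])
  ultimately show "f + f' \<in> {f. reducible \<sigma> d f}"
    unfolding reducible_def reduces_to_def by blast
next
  fix c f
  assume "f \<in> {f. reducible \<sigma> d f}"
  then obtain g where g: "\<forall>s. g s \<noteq> 0 \<longrightarrow> nonnesting \<sigma> s" "f - g \<in> quad_ideal d"
    by (auto simp: reducible_def reduces_to_def)
  have "\<forall>s. scale_coeffs c g s \<noteq> 0 \<longrightarrow> nonnesting \<sigma> s"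
    using g(1) by (simp add: scale_coeffs_def)
  moreover have "scale_coeffs c f - scale_coeffs c g \<in> quad_ideal d"
    unfolding coeffs.scale_right_diff_distrib[symmetric]
    by (rule coeffs.subspace_scale[OF subspace_quad_ideal g(2)])
  ultimately show "scale_coeffs c f \<in> {f. reducible \<sigma> d f}"
    unfolding reducible_def reduces_to_def by blast
qed

lemma reducible_quad_multiple: "reducible \<sigma> (mono_deg n + 2) (quad_multiple n r)"
  unfolding reducible_def reduces_to_def using quad_multiple_in_quad_ideal by (intro exI[of _ 0]) auto

lemma reducible_nonnesting: "nonnesting \<sigma> m \<Longrightarrow> reducible \<sigma> d (monomial m)"
  unfolding reducible_def reduces_to_def
  by (intro exI[of _ "monomial m"]) (auto simp: monomial_def coeffs.subspace_0[OF subspace_quad_ideal])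

lemma monomial_term_mono_eq:
  assumes "k < 3"
  shows "monomial (term_mono r k n) = scale_coeffs ((-1) ^ k) (quad_multiple n r)
    - (\<Sum>j\<in>{..<3} - {k}. scale_coeffs ((-1) ^ (k + j)) (monomial (term_mono r j n)))"
proof
  fix s
  have "quad_multiple n r s = (-1) ^ k * monomial (term_mono r k n) s
      + (\<Sum>j\<in>{..<3} - {k}. (-1) ^ j * monomial (term_mono r j n) s)"
    using assms by (simp add: quad_multiple_def sum.remove)
  then show "monomial (term_mono r k n) s = (scale_coeffs ((-1) ^ k) (quad_multiple n r)
      - (\<Sum>j\<in>{..<3} - {k}. scale_coeffs ((-1) ^ (k + j)) (monomial (term_mono r j n)))) s"
    by (simp add: scale_coeffs_def sum_fun_apply sum_distrib_left power_add algebra_simps)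
qed

text \<open>Each nested pair is the leading term of a relation whose other two terms have smaller
  spread, so rewriting nested pairs by these relations terminates.\<close>

locale straightening = index_order +
  fixes lead :: "quad \<Rightarrow> nat"
  assumes lead_less: "lead r < 3"
    and nested_lead: "nested \<sigma> v w \<Longrightarrow> \<exists>r. quad_term r (lead r) \<in> {(v, w), (w, v)}"
    and lead_spread: "k < 3 \<Longrightarrow> k \<noteq> lead r \<Longrightarrow>
      spread \<sigma> (fst (quad_term r k)) + spread \<sigma> (snd (quad_term r k))
        < spread \<sigma> (fst (quad_term r (lead r))) + spread \<sigma> (snd (quad_term r (lead r)))"
begin

lemma nesting_mono_eq_term_mono:
  assumes "\<not> nonnesting \<sigma> m"
  obtains r n where "m = term_mono r (lead r) n"
proof -
  obtain v w where "nested \<sigma> v w" "m v \<noteq> 0" "m w \<noteq> 0"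
    using assms by (auto simp: nonnesting_def)
  then obtain r where r: "quad_term r (lead r) \<in> {(v, w), (w, v)}"
    using nested_lead by blast
  define a where "a = fst (quad_term r (lead r))"
  define b where "b = snd (quad_term r (lead r))"
  have "0 < m a" "0 < m b" "a \<noteq> b"
    using r \<open>m v \<noteq> 0\<close> \<open>m w \<noteq> 0\<close> \<open>nested \<sigma> v w\<close> by (auto simp: a_def b_def nested_def)
  then have "m = times_var b (times_var a (div_var a (div_var b m)))"
    by (auto simp: times_var_def div_var_def fun_eq_iff)
  then show thesis
    by (intro that[of r "div_var a (div_var b m)"]) (simp add: term_mono_def a_def b_def)
qed

lemma reducible_monomial: "reducible \<sigma> (mono_deg m) (monomial m)"
proof (induction m rule: measure_induct_rule[where f = "total_spread \<sigma>"])
  case (less m)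
  show ?case
  proof (cases "nonnesting \<sigma> m")
    case True
    then show ?thesis
      by (rule reducible_nonnesting)
  next
    case False
    then obtain r n where m: "m = term_mono r (lead r) n"
      by (rule nesting_mono_eq_term_mono)
    have S: "coeffs.subspace {f. reducible \<sigma> (mono_deg m) f}"
      by (rule subspace_reducible)
    have "reducible \<sigma> (mono_deg m) (monomial (term_mono r j n))"
      if "j \<in> {..<3} - {lead r}" for j
    proof -
      have "total_spread \<sigma> (term_mono r j n) < total_spread \<sigma> m"
        using that lead_spread[of j r] by (simp add: m term_mono_def total_spread_times_var)
      then show ?thesis
        using less[of "term_mono r j n"] m by simp
    qed
    moreover have "reducible \<sigma> (mono_deg m) (quad_multiple n r)"
      using reducible_quad_multiple by (simp add: m)
    ultimately have "scale_coeffs ((-1) ^ lead r) (quad_multiple n r)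
        - (\<Sum>j\<in>{..<3} - {lead r}. scale_coeffs ((-1) ^ (lead r + j)) (monomial (term_mono r j n)))
        \<in> {f. reducible \<sigma> (mono_deg m) f}"
      by (intro coeffs.subspace_diff[OF S] coeffs.subspace_scale[OF S] coeffs.subspace_sum[OF S]) simp_all
    then show ?thesis
      by (simp only: mem_Collect_eq m monomial_term_mono_eq[OF lead_less])
  qed
qed

end

section \<open>Lifting functionals along multiplication by a variable\<close>

definition mult_var :: "var \<Rightarrow> (mono \<Rightarrow> 'a::zero) \<Rightarrow> mono \<Rightarrow> 'a" where
  "mult_var v g s = (if 0 < s v then g (div_var v s) else 0)"

lemma mult_var_times_var [simp]: "mult_var v g (times_var v m) = g m"
  by (simp add: mult_var_def)

lemma mult_var_nonzero_imp:
  assumes "mult_var v g s \<noteq> 0"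
  shows "s = times_var v (div_var v s)" and "g (div_var v s) \<noteq> 0"
  using assms times_var_eq_iff[of s v "div_var v s"] by (auto simp: mult_var_def split: if_splits)

lemma mult_var_monomial: "mult_var v (monomial m) = monomial (times_var v m)"
proof
  fix s
  show "mult_var v (monomial m) s = monomial (times_var v m) s"
    by (simp add: mult_var_def monomial_def times_var_eq_iff)
qed

lemma mult_var_diff: "mult_var v (f - g) = mult_var v f - (mult_var v g :: cpoly)"
  by (simp add: mult_var_def fun_eq_iff)

lemma mult_var_quad_multiple: "mult_var v (quad_multiple n r) = quad_multiple (times_var v n) r"
proof
  fix s
  have "mult_var v (quad_multiple n r) s = (\<Sum>k<3. (-1) ^ k * mult_var v (monomial (term_mono r k n)) s)"
    by (simp add: mult_var_def quad_multiple_def)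
  moreover have "term_mono r k (times_var v n) = times_var v (term_mono r k n)" for k
    by (simp add: term_mono_def times_var_commute)
  ultimately show "mult_var v (quad_multiple n r) s = quad_multiple (times_var v n) r s"
    by (simp add: mult_var_monomial quad_multiple_def)
qed

lemma mult_var_quad_ideal:
  assumes "f \<in> quad_ideal d"
  shows "mult_var v f \<in> quad_ideal (Suc d)"
  using assms unfolding quad_ideal_def
proof (induction rule: coeffs.span_induct_alt)
  case base
  have "mult_var v 0 = (0 :: cpoly)"
    by (simp add: mult_var_def fun_eq_iff)
  then show ?case
    by (metis coeffs.span_zero)
next
  case (step c q g)
  then obtain n r where "q = quad_multiple n r" "mono_deg n + 2 = d"
    by blast
  then have "mult_var v q \<in> quad_ideal (Suc d)"
    using quad_multiple_in_quad_ideal[of "times_var v n" r] by (simp add: mult_var_quad_multiple)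
  moreover have "mult_var v (scale_coeffs c q + g) = scale_coeffs c (mult_var v q) + mult_var v g"
    by (simp add: mult_var_def scale_coeffs_def fun_eq_iff)
  ultimately have "mult_var v (scale_coeffs c q + g) \<in> quad_ideal (Suc d)"
    using step.IH subspace_quad_ideal unfolding quad_ideal_def
    by (simp add: coeffs.subspace_add coeffs.subspace_scale)
  then show ?case
    unfolding quad_ideal_def .
qed

lemma sum_mult_var_mult:
  fixes f L :: "mono \<Rightarrow> 'a::semiring_0"
  shows "(\<Sum>s\<in>monos_of_deg (Suc d). mult_var v f s * mult_var v L s) = (\<Sum>m\<in>monos_of_deg d. f m * L m)"
proof -
  have image: "times_var v ` monos_of_deg d \<subseteq> monos_of_deg (Suc d)"
    by (auto simp: monos_of_deg_def)
  have "mult_var v f s * mult_var v L s = 0"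
    if "s \<in> monos_of_deg (Suc d) - times_var v ` monos_of_deg d" for s
  proof (cases "0 < s v")
    case True
    then have s: "s = times_var v (div_var v s)"
      by (simp add: times_var_eq_iff)
    have "mono_deg s = Suc (mono_deg (div_var v s))"
      using arg_cong[OF s, of mono_deg] by (simp only: mono_deg_times_var)
    with that have "div_var v s \<in> monos_of_deg d"
      by (simp add: monos_of_deg_def)
    with s have "s \<in> times_var v ` monos_of_deg d"
      by (rule image_eqI)
    with that show ?thesis
      by simp
  qed (simp add: mult_var_def)
  then have "(\<Sum>s\<in>monos_of_deg (Suc d). mult_var v f s * mult_var v L s)
      = (\<Sum>s\<in>times_var v ` monos_of_deg d. mult_var v f s * mult_var v L s)"
    using image finite_monos_of_deg by (intro sum.mono_neutral_right) auto
  also have "\<dots> = (\<Sum>m\<in>monos_of_deg d. f m * L m)"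
    by (rule sum.reindex_cong[OF inj_on_subset[OF inj_times_var subset_UNIV] refl]) simp
  finally show ?thesis .
qed

context index_order
begin

text \<open>The chord of a variable with \<open>lo = 0\<close> and \<open>hi = 1\<close> is nested with no other chord.\<close>

lemma nonnesting_times_var:
  assumes "lo \<sigma> v = 0" "hi \<sigma> v = 1" and "nonnesting \<sigma> m"
  shows "nonnesting \<sigma> (times_var v m)"
proof -
  have "\<not> nested \<sigma> v w" "\<not> nested \<sigma> w v" for w
    using assms(1,2) lo_less_hi[of w] by (auto simp: nested_def)
  with assms(3) show ?thesis
    by (auto simp: nonnesting_def times_var_def)
qed

lemma reduces_to_unique:
  assumes "reduces_to \<sigma> d f g" and "reduces_to \<sigma> d f g'"
  shows "g = g'"
proof -
  have "(f - g) - (f - g') \<in> quad_ideal d"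
    by (rule coeffs.subspace_diff[OF subspace_quad_ideal]) (use assms in \<open>simp_all add: reduces_to_def\<close>)
  moreover have "(f - g) - (f - g') = g' - g"
    by (simp add: algebra_simps)
  ultimately have "g' - g \<in> quad_ideal d"
    by simp
  moreover have "nonnesting \<sigma> s" if "(g' - g) s \<noteq> 0" for s
  proof -
    have "g s \<noteq> 0 \<or> g' s \<noteq> 0"
      using that by auto
    then show ?thesis
      using assms by (auto simp: reduces_to_def)
  qed
  ultimately have "g' - g = 0"
    by (rule nonnesting_quad_ideal_eq_0)
  then show ?thesis
    by simp
qed

lemma reduces_to_mult_var:
  assumes "lo \<sigma> v = 0" "hi \<sigma> v = 1" and "reduces_to \<sigma> d f g"
  shows "reduces_to \<sigma> (Suc d) (mult_var v f) (mult_var v g)"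
  unfolding reduces_to_def
proof
  show "\<forall>s. mult_var v g s \<noteq> 0 \<longrightarrow> nonnesting \<sigma> s"
  proof (intro allI impI)
    fix s
    assume "mult_var v g s \<noteq> 0"
    then have s: "s = times_var v (div_var v s)" and "g (div_var v s) \<noteq> 0"
      by (rule mult_var_nonzero_imp)+
    then have "nonnesting \<sigma> (div_var v s)"
      using assms(3) by (simp add: reduces_to_def)
    then have "nonnesting \<sigma> (times_var v (div_var v s))"
      by (rule nonnesting_times_var[OF assms(1,2)])
    then show "nonnesting \<sigma> s"
      by (subst s)
  qed
  show "mult_var v f - mult_var v g \<in> quad_ideal (Suc d)"
    using assms(3) mult_var_quad_ideal by (simp add: reduces_to_def flip: mult_var_diff)
qed

end

context straightening
begin

definition normal_form :: "mono \<Rightarrow> cpoly" where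
  "normal_form m = (SOME g. reduces_to \<sigma> (mono_deg m) (monomial m) g)"

lemma reduces_to_normal_form: "reduces_to \<sigma> (mono_deg m) (monomial m) (normal_form m)"
  unfolding normal_form_def using reducible_monomial[of m] unfolding reducible_def by (rule someI_ex)

lemma normal_form_times_var:
  assumes "lo \<sigma> v = 0" "hi \<sigma> v = 1"
  shows "normal_form (times_var v m) = mult_var v (normal_form m)"
proof -
  have "reduces_to \<sigma> (mono_deg (times_var v m)) (monomial (times_var v m)) (mult_var v (normal_form m))"
    using reduces_to_mult_var[OF assms reduces_to_normal_form[of m]] by (simp add: mult_var_monomial)
  with reduces_to_normal_form show ?thesis
    by (rule reduces_to_unique)
qed

end

context straightening
begin

lemma sum_normal_form_mult:
  assumes "vanishes_on_quadrics L"
  shows "(\<Sum>s\<in>monos_of_deg (mono_deg m). normal_form m s * L s) = L m"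
proof -
  have ideal: "monomial m - normal_form m \<in> quad_ideal (mono_deg m)"
    using reduces_to_normal_form by (simp add: reduces_to_def)
  have "(\<Sum>s\<in>monos_of_deg (mono_deg m). (monomial m - normal_form m) s * L s) = 0"
    by (rule complex_scalars.quad_ideal_pairing[OF assms ideal])
  moreover have "(\<Sum>s\<in>monos_of_deg (mono_deg m). monomial m s * L s) = L m"
  proof -
    have "m \<in> monos_of_deg (mono_deg m)"
      by (simp add: monos_of_deg_def)
    then show ?thesis
      by (simp add: monomial_mult finite_monos_of_deg sum.delta')
  qed
  ultimately show ?thesis
    by (simp add: algebra_simps sum_subtractf)
qed

lemma normal_form_quadric:
  "(\<Sum>k<3. scale_coeffs ((-1) ^ k) (normal_form (term_mono r k n))) = 0"
proof (rule nonnesting_quad_ideal_eq_0)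
  let ?d = "mono_deg n + 2"
  have "(\<Sum>k<3. scale_coeffs ((-1) ^ k) (normal_form (term_mono r k n)))
      = quad_multiple n r
        - (\<Sum>k<3. scale_coeffs ((-1) ^ k) (monomial (term_mono r k n) - normal_form (term_mono r k n)))"
    by (simp add: fun_eq_iff quad_multiple_def sum_fun_apply scale_coeffs_def algebra_simps
        sum_subtractf)
  moreover have "monomial (term_mono r k n) - normal_form (term_mono r k n) \<in> quad_ideal ?d" for k
    using reduces_to_normal_form[of "term_mono r k n"] by (simp add: reduces_to_def)
  ultimately show "(\<Sum>k<3. scale_coeffs ((-1) ^ k) (normal_form (term_mono r k n))) \<in> quad_ideal ?d"
    using quad_multiple_in_quad_ideal[of n r]
    by (simp add: coeffs.subspace_diff[OF subspace_quad_ideal] coeffs.subspace_scale[OF subspace_quad_ideal]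
        coeffs.subspace_sum[OF subspace_quad_ideal])
next
  fix s
  assume "(\<Sum>k<3. scale_coeffs ((-1) ^ k) (normal_form (term_mono r k n))) s \<noteq> 0"
  then have "(\<Sum>k<3. (-1) ^ k * normal_form (term_mono r k n) s) \<noteq> 0"
    by (simp add: sum_fun_apply scale_coeffs_def)
  then obtain k where "(-1) ^ k * normal_form (term_mono r k n) s \<noteq> 0"
    using sum.not_neutral_contains_not_neutral by blast
  then show "nonnesting \<sigma> s"
    using reduces_to_normal_form[of "term_mono r k n"] by (simp add: reduces_to_def)
qed

definition lift_functional :: "var \<Rightarrow> cpoly \<Rightarrow> cpoly" where
  "lift_functional v L m = (\<Sum>s\<in>monos_of_deg (mono_deg m). normal_form m s * mult_var v L s)"

lemma vanishes_on_quadrics_lift_functional: "vanishes_on_quadrics (lift_functional v L)"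
  unfolding vanishes_on_quadrics_def
proof (intro allI)
  fix r n
  have "(\<Sum>k<3. (-1) ^ k * lift_functional v L (term_mono r k n))
      = (\<Sum>k<3. \<Sum>s\<in>monos_of_deg (mono_deg n + 2).
          (-1) ^ k * normal_form (term_mono r k n) s * mult_var v L s)"
    by (simp add: lift_functional_def sum_distrib_left mult.assoc)
  also have "\<dots> = (\<Sum>s\<in>monos_of_deg (mono_deg n + 2).
      (\<Sum>k<3. scale_coeffs ((-1) ^ k) (normal_form (term_mono r k n))) s * mult_var v L s)"
    by (subst sum.swap) (simp add: sum_fun_apply scale_coeffs_def sum_distrib_right)
  also have "\<dots> = 0"
    by (simp add: normal_form_quadric)
  finally show "(\<Sum>k<3. (-1) ^ k * lift_functional v L (term_mono r k n)) = 0" .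
qed

lemma lift_functional_times_var:
  assumes "lo \<sigma> v = 0" "hi \<sigma> v = 1" and "vanishes_on_quadrics L"
  shows "lift_functional v L (times_var v m) = L m"
  using sum_normal_form_mult[OF assms(3), of m]
  by (simp add: lift_functional_def normal_form_times_var[OF assms(1,2)] sum_mult_var_mult)

lemma finite_support_lift_functional:
  assumes "finite {m. L m \<noteq> 0}"
  shows "finite {m. lift_functional v L m \<noteq> 0}"
proof (rule finite_subset)
  show "finite (\<Union>n\<in>{m. L m \<noteq> 0}. monos_of_deg (Suc (mono_deg n)))"
    using assms finite_monos_of_deg by blast
  show "{m. lift_functional v L m \<noteq> 0} \<subseteq> (\<Union>n\<in>{m. L m \<noteq> 0}. monos_of_deg (Suc (mono_deg n)))"
  proof
    fix m
    assume "m \<in> {m. lift_functional v L m \<noteq> 0}"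
    then obtain s where s: "s \<in> monos_of_deg (mono_deg m)" "normal_form m s * mult_var v L s \<noteq> 0"
      unfolding lift_functional_def using sum.not_neutral_contains_not_neutral by blast
    then have "mult_var v L s \<noteq> 0"
      by simp
    then have s_eq: "s = times_var v (div_var v s)" and "L (div_var v s) \<noteq> 0"
      by (rule mult_var_nonzero_imp)+
    have "mono_deg m = Suc (mono_deg (div_var v s))"
      using s(1) arg_cong[OF s_eq, of mono_deg] by (simp add: monos_of_deg_def)
    with \<open>L (div_var v s) \<noteq> 0\<close> show "m \<in> (\<Union>n\<in>{m. L m \<noteq> 0}. monos_of_deg (Suc (mono_deg n)))"
      by (intro UN_I[of "div_var v s"]) (simp_all add: monos_of_deg_def)
  qed
qed

theorem exists_pd_preimage:
  assumes v: "lo \<sigma> v = 0" "hi \<sigma> v = 1"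
    and P: "P \<in> polys" "\<And>r. plucker_op r P = (\<lambda>_. 0)"
  shows "\<exists>Q\<in>polys. pd v Q = P \<and> (\<forall>r. plucker_op r Q = (\<lambda>_. 0))"
proof -
  define L where "L = lift_functional v (fact_scaled P)"
  define Q where "Q = (\<lambda>m. L m / mono_fact m)"
  have Q: "fact_scaled Q = L"
    unfolding Q_def by (rule fact_scaled_divide)
  have "vanishes_on_quadrics (fact_scaled P)"
    using P(2) plucker_ops_zero_iff by blast
  then have "pd v Q = P"
    using lift_functional_times_var[OF v] by (simp add: pd_eq_iff_fact_scaled Q L_def)
  moreover have "Q \<in> polys"
    using finite_support_lift_functional P(1) fact_scaled_in_polys_iff
    by (metis L_def Q mem_Collect_eq polys_def)
  moreover have "\<forall>r. plucker_op r Q = (\<lambda>_. 0)"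
    using vanishes_on_quadrics_lift_functional by (simp add: plucker_ops_zero_iff Q L_def)
  ultimately show ?thesis
    by blast
qed

end

text \<open>\<open>order_for s\<close> puts the indices \<open>s, 4\<close> first, so that \<open>x\<^sub>s\<^sub>4\<close> becomes the chord
  \<open>[0, 1]\<close>; \<open>lead_for s r\<close> is the nested term of the relation \<open>r\<close> under this order.\<close>

definition order_for :: "nat \<Rightarrow> nat \<Rightarrow> nat" where
  "order_for s i = (if i = s then 0 else if i = 4 then 1 else if i = 5 then 4
     else if i < s then i + 1 else i)"

fun lead_for :: "nat \<Rightarrow> quad \<Rightarrow> nat" where
  "lead_for s QD = [1, 2, 2] ! (s - 1)"
| "lead_for s Q1 = [0, 2, 1] ! (s - 1)"
| "lead_for s Q2 = [2, 0, 1] ! (s - 1)"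
| "lead_for s Q3 = [2, 1, 0] ! (s - 1)"
| "lead_for s Q4 = [2, 1, 0] ! (s - 1)"

lemma ex_quad: "(\<exists>r. P r) \<longleftrightarrow> P QD \<or> P Q1 \<or> P Q2 \<or> P Q3 \<or> P Q4"
  by (metis quad.exhaust)

lemma all_quad: "(\<forall>r. P r) \<longleftrightarrow> P QD \<and> P Q1 \<and> P Q2 \<and> P Q3 \<and> P Q4"
  by (metis quad.exhaust)

lemma all_less_3: "(\<forall>k<3. P k) \<longleftrightarrow> P 0 \<and> P 1 \<and> P (2::nat)"
  by (auto simp: less_Suc_eq numeral_eq_Suc)

lemma all_var: "(\<forall>v. P v) \<longleftrightarrow> P X1 \<and> P X2 \<and> P X3 \<and> P X4 \<and> P X12 \<and> P X13 \<and> P X14 \<and> P X23 \<and> P X24 \<and> P X34"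
  by (metis var.exhaust)

lemma straightening_order_for:
  assumes "s \<in> {1, 2, 3}"
  shows "straightening (order_for s) (lead_for s)"
proof
  have "{1..5} = {1, 2, 3, 4, 5 :: nat}"
    by auto
  with assms show "inj_on (order_for s) {1..5}" "order_for s ` {1..5} \<subseteq> {..<5}"
    by (auto simp: order_for_def)
  show "lead_for s r < 3" for r
    using assms by (cases r) auto
  show "\<exists>r. quad_term r (lead_for s r) \<in> {(v, w), (w, v)}" if "nested (order_for s) v w" for v w
  proof -
    have "\<forall>v w. nested (order_for s) v w \<longrightarrow> (\<exists>r. quad_term r (lead_for s r) \<in> {(v, w), (w, v)})"
      using assms unfolding all_var ex_quad
      by (elim insertE emptyE) (simp_all add: nested_def lo_def hi_def order_for_def)
    with that show ?thesis
      by blast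
  qed
  show "spread (order_for s) (fst (quad_term r k)) + spread (order_for s) (snd (quad_term r k))
      < spread (order_for s) (fst (quad_term r (lead_for s r)))
        + spread (order_for s) (snd (quad_term r (lead_for s r)))"
    if "k < 3" "k \<noteq> lead_for s r" for k r
  proof -
    have "\<forall>r. \<forall>k<3. k \<noteq> lead_for s r \<longrightarrow>
        spread (order_for s) (fst (quad_term r k)) + spread (order_for s) (snd (quad_term r k))
        < spread (order_for s) (fst (quad_term r (lead_for s r)))
          + spread (order_for s) (snd (quad_term r (lead_for s r)))"
      using assms unfolding all_quad all_less_3
      by (elim insertE emptyE) (simp_all add: spread_def lo_def hi_def order_for_def power2_eq_square)
    with that show ?thesis
      by blast
  qed
qed

theorem mainTheorem7:
  fixes s :: nat and P :: cpoly
  assumes "s \<in> {1, 2, 3}"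
    and "P \<in> polys"
    and "opD P = (\<lambda>_. 0)" and "opD1 P = (\<lambda>_. 0)" and "opD2 P = (\<lambda>_. 0)"
    and "opD3 P = (\<lambda>_. 0)" and "opD4 P = (\<lambda>_. 0)"
  shows "\<exists>Q \<in> polys. pd (var_s4 s) Q = P \<and>
           opD Q = (\<lambda>_. 0) \<and> opD1 Q = (\<lambda>_. 0) \<and> opD2 Q = (\<lambda>_. 0) \<and>
           opD3 Q = (\<lambda>_. 0) \<and> opD4 Q = (\<lambda>_. 0)"
proof -
  interpret straightening "order_for s" "lead_for s"
    using assms(1) by (rule straightening_order_for)
  have "lo (order_for s) (var_s4 s) = 0" "hi (order_for s) (var_s4 s) = 1"
    using assms(1) by (auto simp: lo_def hi_def order_for_def var_s4_def)
  moreover have "plucker_op r P = (\<lambda>_. 0)" for r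
    using assms(3-7) by (cases r) simp_all
  ultimately obtain Q where "Q \<in> polys" "pd (var_s4 s) Q = P" "\<forall>r. plucker_op r Q = (\<lambda>_. 0)"
    using exists_pd_preimage assms(2) by blast
  then show ?thesis
    using plucker_op.simps by metis
qed

end
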